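(* For every positive integer $n$, $$\frac{n^2(n^2-1)}{6}\ \Big|\ \sum_{k=0}^{n-1}k(k+1)(8k+9)T_kT_{k+1}.$$
   Context: For $n\in\mathbb{N}$, the central trinomial coefficient $T_n$ is the constant term of $(1+x+x^{-1})^n$, i.e. $T_n=\sum_{k=0}^{\lfloor n/2\rfloor}\binom{n}{2k}\binom{2k}{k}$. Divisibility $a\mid m$ for integers means $m=ac$ for some integer $c$ (so $0\mid m$ means $m=0$). *)

theory Defs
  imports Main
begin

text \<open>Central trinomial coefficient: constant term of (1 + x + 1/x)^n.\<close>
definition central_trinomial :: "nat \<Rightarrow> int" where
  "central_trinomial n = (\<Sum>k\<le>n div 2. int (n choose (2*k)) * int ((2*k) choose k))"

end

theory Submission
  imports Defs Complex_Main
begin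

text \<open>
  The summands of the central trinomial coefficient satisfy a four-term recurrence (of
  Wilf-Zeilberger type), which sums to
  \<open>(n + 2) T(n + 2) = (2n + 3) T(n + 1) + 3 (n + 1) T(n)\<close>.
  With it, \<open>S(n) = \<Sum>k<n. k (k + 1) (8k + 9) T(k) T(k + 1)\<close> telescopes to the closed form
  \<open>24 S(n) = n\<^sup>2 F(n, T(n), T(n - 1))\<close> for an explicit quadratic form \<open>F\<close>.
  The recurrence also shows that \<open>n + 1\<close> divides \<open>T(n) + 3 T(n - 1)\<close> and \<open>n - 1\<close> divides
  \<open>T(n) - T(n - 1)\<close>, with even quotients because every \<open>T(n)\<close> is odd.  Writing \<open>T(n)\<close> and
  \<open>T(n - 1)\<close> in terms of these quotients exhibits the factor \<open>4 (n\<^sup>2 - 1)\<close> in \<open>F\<close>.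
\<close>

definition trinomial_term :: "nat \<Rightarrow> nat \<Rightarrow> int" where
  "trinomial_term n k = int (n choose (2*k)) * int ((2*k) choose k)"

lemma trinomial_term_0 [simp]: "trinomial_term n 0 = 1"
  by (simp add: trinomial_term_def)

lemma trinomial_term_eq_0: "n < 2*k \<Longrightarrow> trinomial_term n k = 0"
  by (simp add: trinomial_term_def)

lemma Suc_times_binomial_Suc_int:
  "(int k + 1) * int (n choose Suc k) = (int n - int k) * int (n choose k)"
proof (cases "k \<le> n")
  case True
  have "Suc k * (n choose Suc k) = (n - k) * (n choose k)"
    by (metis binomial_absorb_comp binomial_absorption)
  then show ?thesis
    using True by (metis of_nat_Suc of_nat_diff of_nat_mult add.commute)
qed (simp add: binomial_eq_0)

lemma binomial_absorb_comp_int: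
  "(int n + 1 - int k) * int (Suc n choose k) = (int n + 1) * int (n choose k)"
proof (cases "k \<le> Suc n")
  case True
  then show ?thesis
    using binomial_absorb_comp[of "Suc n" k]
    by (metis diff_Suc_1 of_nat_Suc of_nat_diff of_nat_mult add.commute)
qed (simp add: binomial_eq_0)

lemma trinomial_term_Suc_left:
  "(int n + 1 - 2 * int k) * trinomial_term (Suc n) k = (int n + 1) * trinomial_term n k"
  using binomial_absorb_comp_int[of n "2*k"] by (simp add: trinomial_term_def)

lemma trinomial_term_Suc_right:
  "(int k + 1)^2 * trinomial_term n (Suc k)
     = (int n - 2 * int k) * (int n - 2 * int k - 1) * trinomial_term n k"
proof -
  have inner_Suc: "(int k + 1) * int (Suc (Suc (2*k)) choose Suc k) = (2 * int k + 2) * int (Suc (2*k) choose k)"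
    using arg_cong[OF Suc_times_binomial[of k "Suc (2*k)"], of int] by (simp add: algebra_simps del: binomial_Suc_Suc)
  have inner: "(int k + 1) * int (Suc (2*k) choose k) = (2 * int k + 1) * int (2*k choose k)"
    using binomial_absorb_comp_int[of "2*k" k] by (simp add: algebra_simps del: binomial_Suc_Suc)
  have outer_Suc: "(2 * int k + 2) * int (n choose Suc (Suc (2*k))) = (int n - 2 * int k - 1) * int (n choose Suc (2*k))"
    using Suc_times_binomial_Suc_int[of "Suc (2*k)" n] by (simp add: algebra_simps del: binomial_Suc_Suc)
  have outer: "(2 * int k + 1) * int (n choose Suc (2*k)) = (int n - 2 * int k) * int (n choose (2*k))"
    using Suc_times_binomial_Suc_int[of "2*k" n] by (simp add: algebra_simps del: binomial_Suc_Suc)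
  show ?thesis
    unfolding trinomial_term_def using inner_Suc inner outer_Suc outer by (simp del: binomial_Suc_Suc) algebra
qed

lemma trinomial_term_recurrence:
  "(int n + 2) * trinomial_term (n + 2) (Suc k)
     = (2 * int n + 3) * trinomial_term (n + 1) (Suc k) - (int n + 1) * trinomial_term n (Suc k)
       + 4 * (int n + 1) * trinomial_term n k"
proof -
  define D where "D = int n - 2 * int k"
  have left_n2: "(D + 2) * trinomial_term (n + 2) k = (int n + 2) * trinomial_term (n + 1) k"
    using trinomial_term_Suc_left[of "n + 1" k] by (simp add: D_def algebra_simps)
  have left_n1: "(D + 1) * trinomial_term (n + 1) k = (int n + 1) * trinomial_term n k"
    using trinomial_term_Suc_left[of n k] by (simp add: D_def algebra_simps)
  have right_n2: "(int k + 1)^2 * trinomial_term (n + 2) (Suc k) = (D + 2) * (D + 1) * trinomial_term (n + 2) k"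
    using trinomial_term_Suc_right[of k "n + 2"] by (simp add: D_def algebra_simps)
  have right_n1: "(int k + 1)^2 * trinomial_term (n + 1) (Suc k) = (D + 1) * D * trinomial_term (n + 1) k"
    using trinomial_term_Suc_right[of k "n + 1"] by (simp add: D_def algebra_simps)
  have right_n0: "(int k + 1)^2 * trinomial_term n (Suc k) = D * (D - 1) * trinomial_term n k"
    using trinomial_term_Suc_right[of k n] by (simp add: D_def algebra_simps)
  \<comment> \<open>The five relations hold for all \<open>n\<close> and \<open>k\<close> and the factor below is nonzero,
    so the boundary cases \<open>2k \<ge> n\<close> need no separate treatment.\<close>
  have "(int k + 1)^2 * (int n + 1) * (int n + 2) *
      ((int n + 2) * trinomial_term (n + 2) (Suc k)
       - ((2 * int n + 3) * trinomial_term (n + 1) (Suc k) - (int n + 1) * trinomial_term n (Suc k)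
          + 4 * (int n + 1) * trinomial_term n k)) = 0"
    using left_n2 left_n1 right_n2 right_n1 right_n0 D_def by algebra
  then show ?thesis
    by simp
qed

lemma central_trinomial_eq_sum_trinomial_term:
  assumes "n div 2 \<le> N"
  shows "central_trinomial n = (\<Sum>k\<le>N. trinomial_term n k)"
proof -
  have "central_trinomial n = (\<Sum>k\<le>n div 2. trinomial_term n k)"
    unfolding central_trinomial_def trinomial_term_def ..
  also have "\<dots> = (\<Sum>k\<le>N. trinomial_term n k)"
    using assms by (intro sum.mono_neutral_left) (auto intro!: trinomial_term_eq_0)
  finally show ?thesis .
qed

lemma central_trinomial_eq_1_plus_sum:
  assumes "n div 2 \<le> Suc N"
  shows "central_trinomial n = 1 + (\<Sum>k\<le>N. trinomial_term n (Suc k))"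
  using central_trinomial_eq_sum_trinomial_term[OF assms]
  by (simp add: sum.atMost_Suc_shift del: sum.atMost_Suc)

lemma central_trinomial_recurrence:
  "(int n + 2) * central_trinomial (n + 2)
     = (2 * int n + 3) * central_trinomial (n + 1) + 3 * (int n + 1) * central_trinomial n"
proof -
  let ?t = trinomial_term
  have T2: "central_trinomial (n + 2) = 1 + (\<Sum>k\<le>n+1. ?t (n + 2) (Suc k))"
    and T1: "central_trinomial (n + 1) = 1 + (\<Sum>k\<le>n+1. ?t (n + 1) (Suc k))"
    and T0: "central_trinomial n = 1 + (\<Sum>k\<le>n+1. ?t n (Suc k))"
    by (intro central_trinomial_eq_1_plus_sum; simp)+
  have T0': "central_trinomial n = (\<Sum>k\<le>n+1. ?t n k)"
    by (rule central_trinomial_eq_sum_trinomial_term) simp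
  have "(int n + 2) * central_trinomial (n + 2) = int n + 2 + (\<Sum>k\<le>n+1. (int n + 2) * ?t (n + 2) (Suc k))"
    unfolding T2 by (simp add: sum_distrib_left algebra_simps)
  also have "\<dots> = int n + 2 + (2 * int n + 3) * (\<Sum>k\<le>n+1. ?t (n + 1) (Suc k))
      - (int n + 1) * (\<Sum>k\<le>n+1. ?t n (Suc k)) + 4 * (int n + 1) * (\<Sum>k\<le>n+1. ?t n k)"
    by (simp only: trinomial_term_recurrence sum.distrib sum_subtractf sum_distrib_left add_diff_eq diff_add_eq add.assoc)
  also have "\<dots> = (2 * int n + 3) * central_trinomial (n + 1) + 3 * (int n + 1) * central_trinomial n"
    unfolding T1 using T0 T0' by (simp add: algebra_simps)
  finally show ?thesis .
qed

lemma even_central_binomial_Suc: "even (2 * Suc k choose Suc k)"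
proof -
  have "Suc k * (2 * Suc k choose Suc k) = Suc k * (2 * (Suc (2 * k) choose k))"
    using Suc_times_binomial[of k "Suc (2 * k)"] by (simp add: algebra_simps del: binomial_Suc_Suc)
  then show ?thesis
    by (metis mult_cancel_left nat.distinct(1) dvd_triv_left)
qed

lemma odd_central_trinomial: "odd (central_trinomial n)"
proof -
  have "even (trinomial_term n (Suc k))" for k
    unfolding trinomial_term_def using even_central_binomial_Suc[of k] by simp
  then have "even (\<Sum>k\<le>n div 2. trinomial_term n (Suc k))"
    by (intro dvd_sum) auto
  then show ?thesis
    using central_trinomial_eq_1_plus_sum[of n "n div 2"] by simp
qed

definition trinomial_defect :: "nat \<Rightarrow> int" where
  "trinomial_defect n = 2 * central_trinomial (n + 1) + 3 * central_trinomial n - central_trinomial (n + 2)"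

lemma trinomial_defect_mult_plus_two:
  "(int n + 2) * trinomial_defect n = central_trinomial (n + 1) + 3 * central_trinomial n"
  using central_trinomial_recurrence[of n] by (simp add: trinomial_defect_def algebra_simps)

lemma trinomial_defect_mult_plus_one:
  "(int n + 1) * trinomial_defect n = central_trinomial (n + 2) - central_trinomial (n + 1)"
  using central_trinomial_recurrence[of n] by (simp add: trinomial_defect_def algebra_simps)

lemma even_trinomial_defect: "even (trinomial_defect n)"
  using odd_central_trinomial[of n] odd_central_trinomial[of "n + 1"] odd_central_trinomial[of "n + 2"]
  by (simp add: trinomial_defect_def)

definition trinomial_product_sum :: "nat \<Rightarrow> int" where
  "trinomial_product_sum n =
    (\<Sum>k<n. int k * (int k + 1) * (8 * int k + 9) * central_trinomial k * central_trinomial (k + 1))"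

definition trinomial_form :: "int \<Rightarrow> int \<Rightarrow> int \<Rightarrow> int" where
  "trinomial_form x a b = 6 * (4 * x^2 + 20 * x - 21) * a * b - (2 * x - 5)^2 * a^2 - 9 * (2 * x - 3)^2 * b^2"

lemma trinomial_product_sum_closed_form:
  "24 * trinomial_product_sum (Suc n)
     = (int n + 1)^2 * trinomial_form (int n + 1) (central_trinomial (Suc n)) (central_trinomial n)"
proof (induction n)
  case 0
  then show ?case
    by (simp add: trinomial_product_sum_def trinomial_form_def central_trinomial_def)
next
  case (Suc n)
  have "24 * trinomial_product_sum (Suc (Suc n)) = 24 * trinomial_product_sum (Suc n)
      + 24 * (int n + 1) * (int n + 2) * (8 * int n + 17) * central_trinomial (n + 1) * central_trinomial (n + 2)"
    by (simp add: trinomial_product_sum_def algebra_simps)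
  then show ?case
    using Suc.IH central_trinomial_recurrence[of n] unfolding trinomial_form_def
    by simp algebra
qed

lemma four_mult_dvd_trinomial_form:
  fixes x a b y z :: int
  assumes "(x + 1) * y = a + 3 * b" and "(x - 1) * z = a - b" and "even y" and "even z"
  shows "4 * (x^2 - 1) dvd trinomial_form x a b"
proof -
  obtain m l where m: "y = 2 * m" and l: "z = 2 * l"
    using assms(3,4) by (auto elim!: evenE)
  \<comment> \<open>The hypotheses give \<open>2a = (x + 1) m + 3 (x - 1) l\<close> and \<open>2b = (x + 1) m - (x - 1) l\<close>;
    substituting these into the form produces \<open>E\<close>.\<close>
  define E where "E = 6 * (2 * x + 5) * (x - 1) * l * m - (x + 1) * (2 * x - 29) * m^2 - 9 * (x - 1) * (2 * x - 1) * l^2"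
  have "4 * trinomial_form x a b = 4 * (2 * (x^2 - 1) * E)"
    using assms(1,2) unfolding m l E_def trinomial_form_def by algebra
  then have form: "trinomial_form x a b = 2 * (x^2 - 1) * E"
    by simp
  have "even E"
  proof (cases "even x")
    case True
    have "2 * (2 * b) = 2 * ((x + 1) * m - (x - 1) * l)"
      using assms(1,2) unfolding m l by (simp add: algebra_simps)
    then have "even ((x + 1) * m - (x - 1) * l)"
      by (metis dvd_triv_left mult_cancel_left zero_neq_numeral)
    then have "even m = even l"
      using True by simp
    then show ?thesis
      using True by (simp add: E_def)
  next
    case False
    then show ?thesis
      by (simp add: E_def)
  qed
  then obtain q where "E = 2 * q"
    by (rule evenE)
  then have "trinomial_form x a b = 4 * (x^2 - 1) * q"
    using form by simp
  then show ?thesis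
    by simp
qed

lemma six_dvd_square_mult_square_minus_one: "6 dvd (x::int)^2 * (x^2 - 1)"
proof -
  have "fact 3 dvd pochhammer (x - 1) 3"
    by (rule fact_dvd_pochhammer)
  moreover have "pochhammer (x - 1) 3 = (x - 1) * x * (x + 1)"
    by (simp add: pochhammer_Suc numeral_3_eq_3 algebra_simps)
  moreover have "x^2 * (x^2 - 1) = x * ((x - 1) * x * (x + 1))"
    by (simp add: power2_eq_square algebra_simps)
  ultimately show ?thesis
    by (simp add: fact_numeral)
qed

theorem theorem1p2:
  fixes n :: nat
  assumes "n \<ge> 1"
  shows "(int n ^ 2 * (int n ^ 2 - 1) div 6) dvd
    (\<Sum>k<n. int k * (int k + 1) * (8 * int k + 9) * central_trinomial k * central_trinomial (k + 1))"
proof (cases "n = 1")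
  case False
  then obtain N where n: "n = Suc (Suc N)"
    using assms by (metis One_nat_def Suc_le_D le_SucE not0_implies_Suc)
  let ?F = "trinomial_form (int n) (central_trinomial n) (central_trinomial (Suc N))"
  have closed_form: "24 * trinomial_product_sum n = int n ^ 2 * ?F"
    using trinomial_product_sum_closed_form[of "Suc N"] by (simp add: n)
  have "4 * (int n ^ 2 - 1) dvd ?F"
  proof (rule four_mult_dvd_trinomial_form)
    show "(int n + 1) * trinomial_defect (Suc N) = central_trinomial n + 3 * central_trinomial (Suc N)"
      using trinomial_defect_mult_plus_two[of "Suc N"] by (simp add: n add.commute)
    show "(int n - 1) * trinomial_defect N = central_trinomial n - central_trinomial (Suc N)"
      using trinomial_defect_mult_plus_one[of N] by (simp add: n add.commute)
  qed (rule even_trinomial_defect)+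
  then obtain r where r: "?F = 4 * (int n ^ 2 - 1) * r" ..
  obtain d where d: "int n ^ 2 * (int n ^ 2 - 1) = 6 * d"
    using six_dvd_square_mult_square_minus_one ..
  have "24 * trinomial_product_sum n = 24 * (d * r)"
    unfolding closed_form r using d by algebra
  then show ?thesis
    unfolding d by (simp add: trinomial_product_sum_def)
qed simp

end
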